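(* Let $q$ be a prime power and let $R$ be a finite ring containing the field $\mathbb{F}_q$ as a subring. Let $d=\dim_{\mathbb{F}_q}R$ (so $\#R=q^d$), let $r^*$ be the number of units of $R$, and let $v=\#\mathbb{P}(R)$ be the number of points of the chain geometry $\Sigma(\mathbb{F}_q,R)$. For $i=0,1,2,3$ let $\lambda_i$ denote the number of chains containing $i$ given mutually distant points (this number does not depend on the choice of the points). Then \[ \lambda_0=\frac{v\,q^{d-1}r^*}{q^2-1}\,\lambda_3,\qquad \lambda_1=\frac{q^{d-1}r^*}{q-1}\,\lambda_3,\qquad \lambda_2=\frac{r^*}{q-1}\,\lambda_3 . \]
   Context: All rings are associative with unit element $1\neq 0$, and subrings share the unit. $R^2$ is regarded as a left $R$-module. The projective line $\mathbb{P}(R)$ is the set of all submodules of $R^2$ of the form $R(a,b)$ where $(a\ b)$ is the first row of some invertible $2\times 2$ matrix over $R$. For a field $K\subseteq R$ (as a subring), $\mathbb{P}(K)$ is embedded in $\mathbb{P}(R)$ via $K(a,b)\mapsto R(a,b)$. The chain geometry $\Sigma(K,R)$ has point set $\mathbb{P}(R)$ and its blocks, called chains, are the sets $\mathbb{P}(K)^g$ with $g\in \mathrm{GL}_2(R)$ (acting on $R^2$ from the right). Two points $R(a,b)$, $R(c,d)$ are distant if $\begin{pmatrix}a&b\\c&d\end{pmatrix}\in\mathrm{GL}_2(R)$. In particular $\lambda_0$ is the total number of chains and $\lambda_1$ the number of chains through a given point. *)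

theory Defs
  imports Complex_Main
begin

text \<open>2x2 matrices over a ring, written as quadruples (a, b, c, d) for
  the matrix with rows (a b) and (c d).\<close>
type_synonym 'a mat2 = "'a \<times> 'a \<times> 'a \<times> 'a"

definition mat2_mult :: "'a::ring_1 mat2 \<Rightarrow> 'a mat2 \<Rightarrow> 'a mat2" where
  "mat2_mult M N = (case M of (a, b, c, d) \<Rightarrow> case N of (e, f, g, h) \<Rightarrow>
     (a*e + b*g, a*f + b*h, c*e + d*g, c*f + d*h))"

definition mat2_one :: "'a::ring_1 mat2" where
  "mat2_one = (1, 0, 0, 1)"

definition mat2_entries :: "'a mat2 \<Rightarrow> 'a set" where
  "mat2_entries M = (case M of (a, b, c, d) \<Rightarrow> {a, b, c, d})"

definition GL2_in :: "'a::ring_1 set \<Rightarrow> 'a mat2 set" where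
  "GL2_in S = {M. mat2_entries M \<subseteq> S \<and>
     (\<exists>N. mat2_entries N \<subseteq> S \<and> mat2_mult M N = mat2_one \<and> mat2_mult N M = mat2_one)}"

abbreviation GL2 :: "'a::ring_1 mat2 set" where
  "GL2 \<equiv> GL2_in UNIV"

definition is_subfield :: "'a::ring_1 set \<Rightarrow> bool" where
  "is_subfield K \<longleftrightarrow> 0 \<in> K \<and> 1 \<in> K \<and>
     (\<forall>x\<in>K. \<forall>y\<in>K. x + y \<in> K \<and> x - y \<in> K \<and> x * y \<in> K \<and> x * y = y * x) \<and>
     (\<forall>x\<in>K. x \<noteq> 0 \<longrightarrow> (\<exists>y\<in>K. x * y = 1))"

definition ring_units :: "'a::ring_1 set" where
  "ring_units = {u. \<exists>v. u * v = 1 \<and> v * u = 1}"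

definition cyc :: "'a::ring_1 \<Rightarrow> 'a \<Rightarrow> ('a \<times> 'a) set" where
  "cyc a b = {(r * a, r * b) | r. True}"

definition projline :: "('a::ring_1 \<times> 'a) set set" where
  "projline = {cyc a b | a b. \<exists>c d. (a, b, c, d) \<in> GL2}"

text \<open>Image of P(K) in P(R): K(a,b) \<mapsto> R(a,b), (a b) first row of a matrix in GL_2(K).\<close>
definition projline_sub :: "'a::ring_1 set \<Rightarrow> ('a \<times> 'a) set set" where
  "projline_sub K = {cyc a b | a b. \<exists>c d. (a, b, c, d) \<in> GL2_in K}"

definition vec_act :: "'a::ring_1 \<times> 'a \<Rightarrow> 'a mat2 \<Rightarrow> 'a \<times> 'a" where
  "vec_act v M = (case v of (x, y) \<Rightarrow> case M of (a, b, c, d) \<Rightarrow> (x*a + y*c, x*b + y*d))"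

definition pt_act :: "('a::ring_1 \<times> 'a) set \<Rightarrow> 'a mat2 \<Rightarrow> ('a \<times> 'a) set" where
  "pt_act p M = (\<lambda>v. vec_act v M) ` p"

definition chains :: "'a::ring_1 set \<Rightarrow> ('a \<times> 'a) set set set" where
  "chains K = {(\<lambda>p. pt_act p g) ` projline_sub K | g. g \<in> GL2}"

definition distant :: "('a::ring_1 \<times> 'a) set \<Rightarrow> ('a \<times> 'a) set \<Rightarrow> bool" where
  "distant p p' \<longleftrightarrow> (\<exists>a b c d. p = cyc a b \<and> p' = cyc c d \<and> (a, b, c, d) \<in> GL2)"

definition chains_through :: "'a::ring_1 set \<Rightarrow> ('a \<times> 'a) set set \<Rightarrow> nat" where
  "chains_through K S = card {C \<in> chains K. S \<subseteq> C}"

end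

theory Submission
  imports Defs
begin

text \<open>
  GL_2(R) maps chains to chains and preserves distance, and it acts transitively on points,
  on pairs of distant points and on triples of mutually distant points. So the numbers
  lambda_1, lambda_2, lambda_3 may be computed at the points \<infinity> = R(1,0), 0 = R(0,1), 1 = R(1,1).
  A chain consists of q + 1 mutually distant points. Counting incidences between the chains
  through a set S of points and the points distant from all of S gives
  v lambda_1 = (q + 1) lambda_0 for S = {}, q^d lambda_2 = q lambda_1 for S = {\<infinity>}
  (the points distant from \<infinity> are R(t,1), t \<in> R), and r* lambda_3 = (q - 1) lambda_2 for
  S = {\<infinity>, 0} (the points distant from \<infinity> and 0 are R(u,1) with u a unit).
\<close>

section \<open>2x2 matrices acting on R^2\<close>

lemma mat2_mult_assoc:
  "mat2_mult (mat2_mult L M) N = mat2_mult L (mat2_mult M (N::'a::ring_1 mat2))"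
  by (simp add: mat2_mult_def algebra_simps split: prod.split)

lemma mat2_mult_one_left [simp]: "mat2_mult mat2_one M = (M::'a::ring_1 mat2)"
  by (simp add: mat2_mult_def mat2_one_def split: prod.split)

lemma mat2_mult_one_right [simp]: "mat2_mult M mat2_one = (M::'a::ring_1 mat2)"
  by (simp add: mat2_mult_def mat2_one_def split: prod.split)

lemma vec_act_mat2_mult: "vec_act (vec_act v M) N = vec_act v (mat2_mult (M::'a::ring_1 mat2) N)"
  by (simp add: mat2_mult_def vec_act_def algebra_simps split: prod.split)

lemma vec_act_one [simp]: "vec_act v (mat2_one::'a::ring_1 mat2) = v"
  by (simp add: mat2_one_def vec_act_def split: prod.split)

lemma pt_act_mat2_mult: "pt_act (pt_act p M) N = pt_act p (mat2_mult (M::'a::ring_1 mat2) N)"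
  unfolding pt_act_def image_image vec_act_mat2_mult ..

lemma pt_act_one [simp]: "pt_act p (mat2_one::'a::ring_1 mat2) = p"
  unfolding pt_act_def by simp

lemma mem_cyc_iff: "(u, v) \<in> cyc a b \<longleftrightarrow> (\<exists>r. u = r * a \<and> v = r * b)"
  by (auto simp: cyc_def)

lemma cyc_self: "((a::'a::ring_1), b) \<in> cyc a b"
  unfolding mem_cyc_iff by (rule exI[of _ 1]) simp

lemma cyc_eq_range: "cyc a b = range (\<lambda>r. (r * a, r * b))"
  by (auto simp: cyc_def)

lemma pt_act_cyc: "pt_act (cyc x y) (a, b, c, d) = cyc (x*a + y*c) (x*b + (y::'a::ring_1)*d)"
  unfolding cyc_eq_range pt_act_def image_image by (simp add: vec_act_def algebra_simps)

lemma cyc_mult_left_unit: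
  assumes "v * u = 1"
  shows "cyc (u * x) (u * y) = cyc x (y::'a::ring_1)"
proof (intro set_eqI iffI)
  fix w assume "w \<in> cyc (u * x) (u * y)"
  then obtain r where "w = (r * (u * x), r * (u * y))" by (auto simp: cyc_def)
  then show "w \<in> cyc x y" unfolding cyc_def by (auto intro!: exI[of _ "r * u"] simp: mult.assoc)
next
  fix w assume "w \<in> cyc x y"
  then obtain r where w: "w = (r * x, r * y)" by (auto simp: cyc_def)
  have "r * x = (r * v) * (u * x)" "r * y = (r * v) * (u * y)"
    using assms by (simp_all add: mult.assoc flip: mult.assoc[of v u])
  then show "w \<in> cyc (u * x) (u * y)" unfolding cyc_def w by blast
qed

lemma GL2_iff:
  "((a::'a::ring_1), b, c, d) \<in> GL2 \<longleftrightarrow>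
     (\<exists>e f g h. mat2_mult (a, b, c, d) (e, f, g, h) = mat2_one \<and>
                mat2_mult (e, f, g, h) (a, b, c, d) = mat2_one)"
  by (auto simp: GL2_in_def)

lemma GL2I: "mat2_mult M N = mat2_one \<Longrightarrow> mat2_mult N M = mat2_one \<Longrightarrow> (M::'a::ring_1 mat2) \<in> GL2"
  unfolding GL2_in_def by blast

lemma GL2_inverse:
  assumes "(M::'a::ring_1 mat2) \<in> GL2"
  obtains N where "N \<in> GL2" "mat2_mult M N = mat2_one" "mat2_mult N M = mat2_one"
  using assms unfolding GL2_in_def by (blast intro: GL2I)

lemma GL2_mult:
  assumes "(M::'a::ring_1 mat2) \<in> GL2" "N \<in> GL2"
  shows "mat2_mult M N \<in> GL2"
proof -
  obtain M' where M': "mat2_mult M M' = mat2_one" "mat2_mult M' M = mat2_one"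
    using GL2_inverse[OF assms(1)] by blast
  obtain N' where N': "mat2_mult N N' = mat2_one" "mat2_mult N' N = mat2_one"
    using GL2_inverse[OF assms(2)] by blast
  show ?thesis
  proof (rule GL2I[of _ "mat2_mult N' M'"])
    show "mat2_mult (mat2_mult M N) (mat2_mult N' M') = mat2_one"
      by (simp add: mat2_mult_assoc M' N' flip: mat2_mult_assoc[of N N' M'])
    show "mat2_mult (mat2_mult N' M') (mat2_mult M N) = mat2_one"
      by (simp add: mat2_mult_assoc M' N' flip: mat2_mult_assoc[of M' M N])
  qed
qed

lemma GL2_swap_rows:
  assumes "(a, b, c, d) \<in> GL2"
  shows "(c, d, (a::'a::ring_1), b) \<in> GL2"
proof -
  obtain e f g h where "mat2_mult (a, b, c, d) (e, f, g, h) = mat2_one"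
      "mat2_mult (e, f, g, h) (a, b, c, d) = mat2_one"
    using assms unfolding GL2_iff by blast
  then show ?thesis
    unfolding GL2_iff by (intro exI[of _ f] exI[of _ e] exI[of _ h] exI[of _ g])
      (auto simp: mat2_mult_def mat2_one_def add.commute)
qed

lemma GL2_lower_unitriangular: "((1::'a::ring_1), 0, t, 1) \<in> GL2"
  by (rule GL2I[of _ "(1, 0, -t, 1)"]) (simp_all add: mat2_mult_def mat2_one_def)

lemma GL2_diagonal_unit:
  assumes "u * v = 1" "v * u = 1"
  shows "((u::'a::ring_1), 0, 0, 1) \<in> GL2"
  by (rule GL2I[of _ "(v, 0, 0, 1)"]) (simp_all add: mat2_mult_def mat2_one_def assms)

lemma GL2_transposition: "((0::'a::ring_1), 1, 1, 0) \<in> GL2"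
  by (rule GL2I[of _ "(0, 1, 1, 0)"]) (simp_all add: mat2_mult_def mat2_one_def)

lemma pt_act_inverse:
  assumes "(M::'a::ring_1 mat2) \<in> GL2"
  obtains N where "N \<in> GL2" "\<And>p. pt_act (pt_act p M) N = p" "\<And>p. pt_act (pt_act p N) M = p"
  using GL2_inverse[OF assms] by (metis pt_act_mat2_mult pt_act_one)

lemma inj_pt_act: "(M::'a::ring_1 mat2) \<in> GL2 \<Longrightarrow> inj (\<lambda>p. pt_act p M)"
  by (metis injI pt_act_inverse)

section \<open>The projective line\<close>

abbreviation pt_inf :: "('a::ring_1 \<times> 'a) set" where "pt_inf \<equiv> cyc 1 0"
abbreviation pt_zero :: "('a::ring_1 \<times> 'a) set" where "pt_zero \<equiv> cyc 0 1"
abbreviation pt_one :: "('a::ring_1 \<times> 'a) set" where "pt_one \<equiv> cyc 1 1"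

lemma projline_iff: "p \<in> projline \<longleftrightarrow> (\<exists>a b c d. p = cyc a b \<and> ((a::'a::ring_1), b, c, d) \<in> GL2)"
  by (auto simp: projline_def)

lemma pt_act_projline:
  assumes "p \<in> projline" "(M::'a::ring_1 mat2) \<in> GL2"
  shows "pt_act p M \<in> projline"
proof -
  obtain a b c d where p: "p = cyc a b" "(a, b, c, d) \<in> GL2"
    using assms(1) unfolding projline_iff by blast
  obtain e f g h where M: "M = (e, f, g, h)" by (cases M)
  show ?thesis
    using GL2_mult[OF p(2) assms(2)] unfolding projline_iff p M pt_act_cyc
    by (auto simp: mat2_mult_def)
qed

lemma distant_pt_act:
  assumes "distant p p'" "(M::'a::ring_1 mat2) \<in> GL2"
  shows "distant (pt_act p M) (pt_act p' M)"
proof -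
  obtain a b c d where p: "p = cyc a b" "p' = cyc c d" "(a, b, c, d) \<in> GL2"
    using assms(1) unfolding distant_def by blast
  obtain e f g h where M: "M = (e, f, g, h)" by (cases M)
  show ?thesis
    using GL2_mult[OF p(3) assms(2)] unfolding distant_def p M pt_act_cyc
    by (auto simp: mat2_mult_def)
qed

lemma distant_sym: "distant p p' \<Longrightarrow> distant p' (p::('a::ring_1 \<times> 'a) set)"
  unfolding distant_def using GL2_swap_rows by blast

lemma distant_imp_projline: "distant p p' \<Longrightarrow> p \<in> (projline::('a::ring_1 \<times> 'a) set set)"
  unfolding distant_def projline_def by blast

lemma not_distant_self: "\<not> distant p (p::('a::ring_1 \<times> 'a) set)"
proof
  assume "distant p p"
  then obtain a b c d where p: "p = cyc a b" "p = cyc c d" "(a, b, c, d) \<in> GL2"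
    unfolding distant_def by blast
  obtain e f g h where "mat2_mult (a, b, c, d) (e, f, g, h) = mat2_one"
    using p(3) unfolding GL2_iff by blast
  then have inv: "a*e + b*g = 1" "c*e + d*g = 0" "c*f + d*h = 1"
    by (auto simp: mat2_mult_def mat2_one_def)
  obtain r where r: "c = r * a" "d = r * b"
    using cyc_self[of c d] unfolding p(2)[symmetric] p(1) mem_cyc_iff by blast
  have "r = r * (a*e + b*g)" using inv by simp
  also have "\<dots> = c*e + d*g" using r by (simp add: algebra_simps)
  finally have "r = 0" using inv by simp
  then show False using inv r by simp
qed

lemma distant_pt_inf_cyc: "distant pt_inf (cyc t (1::'a::ring_1))"
  unfolding distant_def using GL2_lower_unitriangular by blast

lemma distant_pt_inf_pt_zero: "distant pt_inf (pt_zero::('a::ring_1 \<times> 'a) set)"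
  by (rule distant_pt_inf_cyc)

lemma distant_pt_infD:
  assumes "distant pt_inf x"
  obtains t where "x = cyc t (1::'a::ring_1)"
proof -
  obtain a b c d where p: "pt_inf = cyc a b" "x = cyc c d" "(a, b, c, d) \<in> GL2"
    using assms unfolding distant_def by blast
  obtain e f g h where "mat2_mult (a, b, c, d) (e, f, g, h) = mat2_one"
      "mat2_mult (e, f, g, h) (a, b, c, d) = mat2_one"
    using p(3) unfolding GL2_iff by blast
  then have inv: "a*f + b*h = 0" "c*f + d*h = 1" "g*b + h*d = 1"
    by (auto simp: mat2_mult_def mat2_one_def)
  have "b = 0"
    using cyc_self[of a b] unfolding p(1)[symmetric] mem_cyc_iff by auto
  moreover obtain s where "s * a = 1"
    using cyc_self[of "1::'a" 0] unfolding p(1) mem_cyc_iff by metis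
  ultimately have "f = 0" using inv by (metis mult.assoc mult_1 mult_zero_right add_0_right mult_zero_left)
  then have "d * h = 1" "h * d = 1" using inv \<open>b = 0\<close> by simp_all
  then have "x = cyc (h * c) 1"
    unfolding p(2) using cyc_mult_left_unit[of h d "h * c" 1] by (simp add: mult.assoc[symmetric])
  then show ?thesis by (rule that)
qed

lemma pt_act_transposition: "pt_act (cyc a b) (0, 1, 1, 0) = cyc b (a::'a::ring_1)"
  by (simp add: pt_act_cyc)

lemma distant_pt_zeroD:
  assumes "distant pt_zero x"
  obtains t where "x = cyc (1::'a::ring_1) t"
proof -
  let ?J = "(0, 1, 1, 0) :: 'a mat2"
  have "mat2_mult ?J ?J = mat2_one" by (simp add: mat2_mult_def mat2_one_def)
  then have x: "x = pt_act (pt_act x ?J) ?J" by (simp add: pt_act_mat2_mult)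
  have "distant pt_inf (pt_act x ?J)"
    using distant_pt_act[OF assms GL2_transposition] by (simp add: pt_act_transposition)
  then obtain t where "pt_act x ?J = cyc t 1" by (rule distant_pt_infD)
  then show ?thesis using x that by (simp add: pt_act_transposition)
qed

lemma inj_cyc_1: "inj (\<lambda>t. cyc t (1::'a::ring_1))"
proof (rule injI)
  fix t t' :: 'a
  assume "cyc t 1 = cyc t' 1"
  then have "(t, 1) \<in> cyc t' 1" using cyc_self by metis
  then show "t = t'" unfolding mem_cyc_iff by auto
qed

lemma distant_pt_inf_set:
  "{x \<in> projline. distant pt_inf x} = range (\<lambda>t. cyc t (1::'a::ring_1))"
proof safe
  fix x :: "('a \<times> 'a) set"
  assume "distant pt_inf x"
  then show "x \<in> range (\<lambda>t. cyc t 1)" by (metis distant_pt_infD rangeI)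
next
  fix t :: 'a
  show "distant pt_inf (cyc t 1)" by (rule distant_pt_inf_cyc)
  then show "cyc t 1 \<in> projline" by (rule distant_imp_projline[OF distant_sym])
qed

lemma distant_pt_inf_pt_zero_set:
  "{x \<in> projline. distant pt_inf x \<and> distant pt_zero x} = (\<lambda>t. cyc t (1::'a::ring_1)) ` ring_units"
proof safe
  fix x :: "('a \<times> 'a) set"
  assume "distant pt_inf x" "distant pt_zero x"
  then obtain t t' where x: "x = cyc t 1" "x = cyc 1 t'"
    by (metis distant_pt_infD distant_pt_zeroD)
  have "t' * t = 1"
    using cyc_self[of 1 t'] unfolding x(2)[symmetric] x(1) mem_cyc_iff by auto
  moreover have "t * t' = 1"
    using cyc_self[of t 1] unfolding x(1)[symmetric] x(2) mem_cyc_iff by auto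
  ultimately have "t \<in> ring_units" unfolding ring_units_def by blast
  then show "x \<in> (\<lambda>t. cyc t 1) ` ring_units" using x by blast
next
  fix u :: 'a
  assume "u \<in> ring_units"
  then obtain v where v: "u * v = 1" "v * u = 1" unfolding ring_units_def by blast
  show "cyc u 1 \<in> projline" "distant pt_inf (cyc u 1)"
    using distant_pt_inf_set by blast+
  have "(0, 1, u, 1) \<in> GL2"
    by (rule GL2I[of _ "(-v, v, 1, 0)"]) (simp_all add: mat2_mult_def mat2_one_def v)
  then show "distant pt_zero (cyc u 1)" unfolding distant_def by blast
qed

section \<open>Chains\<close>

lemma subfield_inverse:
  assumes "is_subfield K" "k \<in> K" "k \<noteq> 0"
  obtains y where "y \<in> K" "k * y = 1" "y * k = (1::'a::ring_1)"
  using assms unfolding is_subfield_def by metis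

lemma projline_sub_eq:
  assumes K: "is_subfield K"
  shows "projline_sub K = insert pt_inf ((\<lambda>k. cyc k (1::'a::ring_1)) ` K)"
proof (intro set_eqI iffI)
  have K_mult: "\<And>x y. x \<in> K \<Longrightarrow> y \<in> K \<Longrightarrow> x * y \<in> K"
    using K unfolding is_subfield_def by auto
  fix x
  assume "x \<in> projline_sub K"
  then obtain a b c d e f g h where x: "x = cyc a b" and ab: "a \<in> K" "b \<in> K"
      and "mat2_mult (a, b, c, d) (e, f, g, h) = mat2_one"
    unfolding projline_sub_def GL2_in_def mat2_entries_def by auto
  then have inv: "a * e + b * g = 1" by (simp add: mat2_mult_def mat2_one_def)
  show "x \<in> insert pt_inf ((\<lambda>k. cyc k 1) ` K)"
  proof (cases "b = 0")
    case True
    with inv have "a \<noteq> 0" by auto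
    then obtain y where "y * a = 1" using subfield_inverse[OF K ab(1)] by blast
    then have "x = pt_inf" using cyc_mult_left_unit[of y a 1 0] x True by simp
    then show ?thesis by simp
  next
    case False
    then obtain y where y: "y \<in> K" "b * y = 1" "y * b = 1"
      using subfield_inverse[OF K ab(2)] by blast
    then have "x = cyc (y * a) 1"
      using cyc_mult_left_unit[of y b "y * a" 1] x by (simp add: mult.assoc[symmetric])
    then show ?thesis using K_mult[OF y(1) ab(1)] by blast
  qed
next
  have K01: "0 \<in> K" "1 \<in> K" and K_diff: "\<And>x y. x \<in> K \<Longrightarrow> y \<in> K \<Longrightarrow> x - y \<in> K"
    using K unfolding is_subfield_def by auto
  fix x
  assume "x \<in> insert pt_inf ((\<lambda>k. cyc k 1) ` K)"
  then consider "x = pt_inf" | k where "k \<in> K" "x = cyc k 1" by blast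
  then show "x \<in> projline_sub K"
  proof cases
    case 1
    have "(1, 0, 0, 1) \<in> GL2_in K" unfolding GL2_in_def mat2_entries_def using K01
      by (intro CollectI conjI exI[of _ "(1, 0, 0, 1)"]) (auto simp: mat2_mult_def mat2_one_def)
    then show ?thesis unfolding projline_sub_def 1 by blast
  next
    case 2
    have "0 - k \<in> K" using K_diff K01 2 by blast
    then have "(k, 1, 1, 0) \<in> GL2_in K" unfolding GL2_in_def mat2_entries_def using K01 2
      by (intro CollectI conjI exI[of _ "(0, 1, 1, -k)"]) (auto simp: mat2_mult_def mat2_one_def)
    then show ?thesis unfolding projline_sub_def 2 by blast
  qed
qed

lemma card_projline_sub:
  assumes "is_subfield K" "finite K"
  shows "card (projline_sub K) = card (K::'a::ring_1 set) + 1"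
proof -
  have "pt_inf \<notin> (\<lambda>k. cyc k (1::'a)) ` K"
    using distant_pt_inf_cyc not_distant_self by (metis imageE)
  moreover have "card ((\<lambda>k. cyc k (1::'a)) ` K) = card K"
    by (rule card_image[OF inj_on_subset[OF inj_cyc_1 subset_UNIV]])
  ultimately show ?thesis unfolding projline_sub_eq[OF assms(1)] using assms(2) by simp
qed

lemma distant_cyc_subfield:
  assumes K: "is_subfield K" and "k \<in> K" "k' \<in> K" "k \<noteq> k'"
  shows "distant (cyc k 1) (cyc k' (1::'a::ring_1))"
proof -
  have K_ops: "\<And>x y. x \<in> K \<Longrightarrow> y \<in> K \<Longrightarrow> x - y \<in> K \<and> x * y = y * x"
    using K unfolding is_subfield_def by auto
  have "k - k' \<in> K" "k - k' \<noteq> 0" using K_ops assms by auto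
  then obtain t where t: "t \<in> K" "(k - k') * t = 1" "t * (k - k') = 1"
    using subfield_inverse[OF K] by blast
  have comm: "t * k = k * t" "t * k' = k' * t" "k * k' = k' * k" using K_ops t assms by auto
  have "k * t - k' * t = 1" "t * k - t * k' = 1" using t by (simp_all add: algebra_simps)
  moreover have "k * t * k' = k' * t * k"
    by (simp add: mult.assoc comm(1,2)) (simp add: mult.assoc[symmetric] comm(3))
  ultimately have "(k, 1, k', 1) \<in> GL2"
    by (intro GL2I[of _ "(t, -t, -(k' * t), k * t)"]) (simp_all add: mat2_mult_def mat2_one_def mult.assoc)
  then show ?thesis unfolding distant_def by blast
qed

lemma projline_sub_distant:
  assumes K: "is_subfield K" and "p \<in> projline_sub K" "p' \<in> projline_sub K" "p \<noteq> p'"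
  shows "distant p (p'::('a::ring_1 \<times> 'a) set)"
proof -
  consider "p = pt_inf" | k where "k \<in> K" "p = cyc k 1"
    using assms(2) unfolding projline_sub_eq[OF K] by blast
  moreover consider "p' = pt_inf" | k' where "k' \<in> K" "p' = cyc k' 1"
    using assms(3) unfolding projline_sub_eq[OF K] by blast
  ultimately show ?thesis
    using assms(4) distant_pt_inf_cyc distant_sym distant_cyc_subfield[OF K] by metis
qed

lemma chains_iff: "C \<in> chains K \<longleftrightarrow> (\<exists>g\<in>GL2. C = (\<lambda>p. pt_act p g) ` projline_sub (K::'a::ring_1 set))"
  unfolding chains_def by blast

lemma chain_subset_projline:
  assumes "C \<in> chains K"
  shows "C \<subseteq> (projline::('a::ring_1 \<times> 'a) set set)"
proof -
  have "projline_sub K \<subseteq> projline"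
    unfolding projline_sub_def projline_def GL2_in_def by blast
  then show ?thesis using assms pt_act_projline unfolding chains_iff by blast
qed

lemma chain_distant:
  assumes K: "is_subfield K" and "C \<in> chains K" "p \<in> C" "p' \<in> C" "p \<noteq> p'"
  shows "distant p (p'::('a::ring_1 \<times> 'a) set)"
proof -
  obtain g where g: "g \<in> GL2" "C = (\<lambda>p. pt_act p g) ` projline_sub K"
    using assms(2) unfolding chains_iff by blast
  then obtain p0 p0' where "p0 \<in> projline_sub K" "p0' \<in> projline_sub K"
      "p = pt_act p0 g" "p' = pt_act p0' g"
    using assms(3,4) by blast
  then show ?thesis using assms(5) projline_sub_distant[OF K] distant_pt_act g(1) by metis
qed

lemma card_chain:
  assumes "is_subfield K" "finite K" "C \<in> chains K"
  shows "card C = card (K::'a::ring_1 set) + 1"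
proof -
  obtain g where g: "g \<in> GL2" "C = (\<lambda>p. pt_act p g) ` projline_sub K"
    using assms(3) unfolding chains_iff by blast
  then have "card C = card (projline_sub K)"
    using card_image[OF inj_on_subset[OF inj_pt_act[OF g(1)] subset_UNIV]] by simp
  then show ?thesis using card_projline_sub[OF assms(1,2)] by simp
qed

lemma chain_pt_act:
  assumes "C \<in> chains K" "(M::'a::ring_1 mat2) \<in> GL2"
  shows "(\<lambda>p. pt_act p M) ` C \<in> chains K"
proof -
  obtain g where g: "g \<in> GL2" "C = (\<lambda>p. pt_act p g) ` projline_sub K"
    using assms(1) unfolding chains_iff by blast
  then have "(\<lambda>p. pt_act p M) ` C = (\<lambda>p. pt_act p (mat2_mult g M)) ` projline_sub K"
    by (simp add: image_image pt_act_mat2_mult)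
  then show ?thesis unfolding chains_iff using GL2_mult[OF g(1) assms(2)] by blast
qed

lemma chains_through_pt_act:
  assumes M: "(M::'a::ring_1 mat2) \<in> GL2"
  shows "chains_through K ((\<lambda>p. pt_act p M) ` S) = chains_through K S"
proof -
  obtain N where N: "N \<in> GL2" "\<And>p. pt_act (pt_act p M) N = p" "\<And>p. pt_act (pt_act p N) M = p"
    using pt_act_inverse[OF M] by blast
  have NM: "(\<lambda>p. pt_act p N) ` (\<lambda>p. pt_act p M) ` X = X"
    and MN: "(\<lambda>p. pt_act p M) ` (\<lambda>p. pt_act p N) ` X = X" for X
    by (simp_all add: image_image N(2,3))
  have "bij_betw (image (\<lambda>p. pt_act p N))
          {C \<in> chains K. (\<lambda>p. pt_act p M) ` S \<subseteq> C} {C \<in> chains K. S \<subseteq> C}"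
    by (rule bij_betw_byWitness[where f' = "image (\<lambda>p. pt_act p M)"])
      (auto simp: NM MN intro: chain_pt_act M N(1) rev_image_eqI[where f = "\<lambda>p. pt_act p N", OF _ N(2)[symmetric]])
  then show ?thesis unfolding chains_through_def by (rule bij_betw_same_card)
qed

section \<open>Transitivity of GL_2(R) and the numbers lambda_i\<close>

lemma GL2_maps_pt_inf_pt_zero:
  assumes "distant x1 x2"
  obtains M where "(M::'a::ring_1 mat2) \<in> GL2" "x1 = pt_act pt_inf M" "x2 = pt_act pt_zero M"
  using assms unfolding distant_def by (force simp: pt_act_cyc)

text \<open>After moving x1, x2 to \<infinity>, 0, the third point becomes some R(u,1) with u a unit,
  and diag(u,1) fixes \<infinity> and 0 while mapping 1 to R(u,1).\<close>

lemma GL2_maps_pt_inf_pt_zero_pt_one: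
  assumes "distant x1 x2" "distant x1 x3" "distant x2 x3"
  obtains M where "(M::'a::ring_1 mat2) \<in> GL2"
    "x1 = pt_act pt_inf M" "x2 = pt_act pt_zero M" "x3 = pt_act pt_one M"
proof -
  obtain M0 where M0: "M0 \<in> GL2" "x1 = pt_act pt_inf M0" "x2 = pt_act pt_zero M0"
    using GL2_maps_pt_inf_pt_zero[OF assms(1)] by blast
  obtain N0 where N0: "N0 \<in> GL2" "\<And>p. pt_act (pt_act p M0) N0 = p" "\<And>p. pt_act (pt_act p N0) M0 = p"
    using pt_act_inverse[OF M0(1)] by blast
  define y where "y = pt_act x3 N0"
  have "distant pt_inf y" "distant pt_zero y"
    using distant_pt_act[OF assms(2) N0(1)] distant_pt_act[OF assms(3) N0(1)]
    unfolding y_def M0(2,3) N0(2) by simp_all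
  then have "y \<in> (\<lambda>t. cyc t 1) ` ring_units"
    using distant_pt_inf_pt_zero_set distant_imp_projline[OF distant_sym] by blast
  then obtain u v where y: "y = cyc u 1" and uv: "u * v = 1" "v * u = 1"
    unfolding ring_units_def by blast
  have "pt_act pt_inf (u, 0, 0, 1) = pt_inf"
    using cyc_mult_left_unit[of v u 1 0] uv by (simp add: pt_act_cyc)
  moreover have "pt_act pt_zero (u, 0, 0, 1) = pt_zero" "pt_act pt_one (u, 0, 0, 1) = y"
    unfolding y by (simp_all add: pt_act_cyc)
  moreover have "pt_act y M0 = x3" unfolding y_def N0(3) ..
  ultimately show ?thesis
    using that[OF GL2_mult[OF GL2_diagonal_unit[OF uv] M0(1)]] M0(2,3)
    by (simp flip: pt_act_mat2_mult)
qed

lemma chains_through_point: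
  "p \<in> projline \<Longrightarrow> chains_through K {p} = chains_through K {pt_inf::('a::ring_1 \<times> 'a) set}"
  unfolding projline_iff using chains_through_pt_act[of _ K "{pt_inf}"] by (force simp: pt_act_cyc)

lemma chains_through_distant_pair:
  assumes "distant p1 p2"
  shows "chains_through K {p1, p2} = chains_through K {pt_inf, pt_zero::('a::ring_1 \<times> 'a) set}"
proof -
  obtain M where "M \<in> GL2" "p1 = pt_act pt_inf M" "p2 = pt_act pt_zero M"
    using GL2_maps_pt_inf_pt_zero[OF assms] by blast
  then show ?thesis using chains_through_pt_act[of M K "{pt_inf, pt_zero}"] by simp
qed

lemma chains_through_distant_triple:
  assumes "distant x1 x2" "distant x1 x3" "distant x2 x3"
  shows "chains_through K {x1, x2, x3} = chains_through K {pt_inf, pt_zero, pt_one::('a::ring_1 \<times> 'a) set}"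
proof -
  obtain M where "M \<in> GL2" "x1 = pt_act pt_inf M" "x2 = pt_act pt_zero M" "x3 = pt_act pt_one M"
    using GL2_maps_pt_inf_pt_zero_pt_one[OF assms] by blast
  then show ?thesis using chains_through_pt_act[of M K "{pt_inf, pt_zero, pt_one}"] by simp
qed

section \<open>Double counting\<close>

text \<open>A chain through S meets the set of points distant from all of S exactly in C - S.\<close>

lemma chains_through_double_count:
  fixes K :: "'a::{ring_1, finite} set"
  assumes K: "is_subfield K"
    and const: "\<And>x. x \<in> projline \<Longrightarrow> \<forall>s\<in>S. distant s x \<Longrightarrow> chains_through K (insert x S) = c"
  shows "card {x \<in> projline. \<forall>s\<in>S. distant s x} * c = (card K + 1 - card S) * chains_through K S"
proof -
  define X where "X = {x \<in> projline. \<forall>s\<in>S. distant s x}"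
  define A where "A = {C \<in> chains K. S \<subseteq> C}"
  have "{x \<in> X. x \<in> C} = C - S" if "C \<in> A" for C
    using that chain_subset_projline chain_distant[OF K] not_distant_self
    unfolding X_def A_def by blast
  then have "card {x \<in> X. x \<in> C} = card K + 1 - card S" if "C \<in> A" for C
    using that card_chain[OF K finite] unfolding A_def by (simp add: card_Diff_subset)
  then have "(\<Sum>x\<in>X. card {C \<in> A. x \<in> C}) = (card K + 1 - card S) * card A"
    by (intro sum_multicount) simp_all
  moreover have "card {C \<in> A. x \<in> C} = c" if "x \<in> X" for x
  proof -
    have "{C \<in> A. x \<in> C} = {C \<in> chains K. insert x S \<subseteq> C}" unfolding A_def by auto
    then show ?thesis using const that unfolding X_def chains_through_def by simp
  qed
  ultimately show ?thesis unfolding X_def A_def chains_through_def by simp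
qed

lemma card_projline_mult_chains_through_pt_inf:
  fixes K :: "'a::{ring_1, finite} set"
  assumes "is_subfield K"
  shows "card (projline :: ('a \<times> 'a) set set) * chains_through K {pt_inf} = (card K + 1) * card (chains K)"
  using chains_through_double_count[OF assms, of "{}"] chains_through_point[of _ K]
  by (simp add: chains_through_def)

lemma card_UNIV_mult_chains_through_pt_inf_pt_zero:
  fixes K :: "'a::{ring_1, finite} set"
  assumes "is_subfield K"
  shows "card (UNIV :: 'a set) * chains_through K {pt_inf, pt_zero} = card K * chains_through K {pt_inf}"
proof -
  have "card {x \<in> projline :: ('a \<times> 'a) set set. distant pt_inf x} = card (UNIV :: 'a set)"
    unfolding distant_pt_inf_set using inj_cyc_1 by (rule card_image)
  moreover have "chains_through K {x, pt_inf} = chains_through K {pt_inf, pt_zero}"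
    if "distant pt_inf x" for x
    using chains_through_distant_pair[OF that, of K] by (simp add: insert_commute)
  ultimately show ?thesis
    using chains_through_double_count[OF assms, of "{pt_inf}"] by simp
qed

lemma card_units_mult_chains_through_pt_inf_pt_zero_pt_one:
  fixes K :: "'a::{ring_1, finite} set"
  assumes "is_subfield K"
  shows "card (ring_units :: 'a set) * chains_through K {pt_inf, pt_zero, pt_one}
           = (card K - 1) * chains_through K {pt_inf, pt_zero}"
proof -
  have "card {x \<in> projline :: ('a \<times> 'a) set set. distant pt_inf x \<and> distant pt_zero x} = card (ring_units :: 'a set)"
    unfolding distant_pt_inf_pt_zero_set using inj_on_subset[OF inj_cyc_1 subset_UNIV] by (rule card_image)
  moreover have "chains_through K {x, pt_inf, pt_zero} = chains_through K {pt_inf, pt_zero, pt_one}"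
    if "distant pt_inf x" "distant pt_zero x" for x
    using chains_through_distant_triple[OF distant_pt_inf_pt_zero that, of K]
    by (simp add: insert_commute)
  moreover have "card {pt_inf, pt_zero :: ('a \<times> 'a) set} = 2"
    using distant_pt_inf_pt_zero not_distant_self by (metis card_2_iff)
  ultimately show ?thesis
    using chains_through_double_count[OF assms, of "{pt_inf, pt_zero}"] by simp
qed

lemma chain_numbers_from_counts:
  fixes q d v r c l1 l2 l3 :: nat
  assumes q: "q \<ge> 2" and d: "d \<ge> 1"
    and count0: "v * l1 = (q + 1) * c" and count1: "q ^ d * l2 = q * l1"
    and count2: "r * l3 = (q - 1) * l2"
  shows "real c = real v * real q ^ (d - 1) * real r / (real q ^ 2 - 1) * real l3"
    and "real l1 = real q ^ (d - 1) * real r / (real q - 1) * real l3"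
    and "real l2 = real r / (real q - 1) * real l3"
proof -
  have "real r * real l3 = (real q - 1) * real l2"
    using arg_cong[OF count2, of real] q by simp
  moreover have "real q - 1 \<noteq> 0" using q by simp
  ultimately show l2: "real l2 = real r / (real q - 1) * real l3" by (simp add: field_simps)
  have "q * (q ^ (d - 1) * l2) = q * l1"
    using count1 d by (simp add: power_eq_if mult.assoc)
  then have "l1 = q ^ (d - 1) * l2" using q by simp
  then show l1: "real l1 = real q ^ (d - 1) * real r / (real q - 1) * real l3"
    using l2 by simp
  have "real v * real l1 = (real q + 1) * real c"
    using arg_cong[OF count0, of real] by (simp add: algebra_simps)
  then have "real c = real v * real l1 / (real q + 1)" by (simp add: field_simps)
  also have "\<dots> = real v * real q ^ (d - 1) * real r / ((real q + 1) * (real q - 1)) * real l3"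
    unfolding l1 by (simp add: mult_ac)
  also have "(real q + 1) * (real q - 1) = real q ^ 2 - 1"
    by (simp add: power2_eq_square algebra_simps)
  finally show "real c = real v * real q ^ (d - 1) * real r / (real q ^ 2 - 1) * real l3" .
qed

theorem mainTheorem1:
  fixes K :: "'a::{ring_1, finite} set" and q d :: nat
    and p p1 p2 x1 x2 x3 :: "('a \<times> 'a) set"
  assumes "is_subfield K"
    and "card K = q"
    and "card (UNIV :: 'a set) = q ^ d"
    and "p \<in> projline"
    and "p1 \<in> projline" "p2 \<in> projline" "distant p1 p2"
    and "x1 \<in> projline" "x2 \<in> projline" "x3 \<in> projline"
    and "distant x1 x2" "distant x1 x3" "distant x2 x3"
  shows "real (card (chains K)) =
           real (card (projline :: ('a \<times> 'a) set set)) * real q ^ (d - 1)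
             * real (card (ring_units :: 'a set)) / (real q ^ 2 - 1)
             * real (chains_through K {x1, x2, x3}) \<and>
         real (chains_through K {p}) =
           real q ^ (d - 1) * real (card (ring_units :: 'a set)) / (real q - 1)
             * real (chains_through K {x1, x2, x3}) \<and>
         real (chains_through K {p1, p2}) =
           real (card (ring_units :: 'a set)) / (real q - 1)
             * real (chains_through K {x1, x2, x3})"
proof -
  have "{0, 1} \<subseteq> K" using assms(1) unfolding is_subfield_def by simp
  then have q: "q \<ge> 2" using card_mono[OF finite, of "{0, 1}" K] assms(2) by simp
  have "2 \<le> q ^ d" using card_mono[OF finite subset_UNIV, of "{0::'a, 1}"] assms(3) by simp
  then have d: "d \<ge> 1" by (cases d) auto
  have "card (projline :: ('a \<times> 'a) set set) * chains_through K {pt_inf} = (q + 1) * card (chains K)"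
    and "q ^ d * chains_through K {pt_inf, pt_zero} = q * chains_through K {pt_inf}"
    and "card (ring_units :: 'a set) * chains_through K {pt_inf, pt_zero, pt_one}
           = (q - 1) * chains_through K {pt_inf, pt_zero}"
    using card_projline_mult_chains_through_pt_inf[OF assms(1)]
      card_UNIV_mult_chains_through_pt_inf_pt_zero[OF assms(1)]
      card_units_mult_chains_through_pt_inf_pt_zero_pt_one[OF assms(1)]
    unfolding assms(2,3) by simp_all
  from chain_numbers_from_counts[OF q d this] show ?thesis
    unfolding chains_through_point[OF assms(4)] chains_through_distant_pair[OF assms(7)]
      chains_through_distant_triple[OF assms(11-13)] by blast
qed

end
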